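(* Let $G=(\Sigma,S,s_0,\delta)$ be a regular commutative grammar, let $n\in\mathbb{N}$, and let $D$ be a run of $G$ such that $\|D\|>1+n|\delta|$. Then $D=D_1+nC$, where $D_1$ is a run of $G$, $C$ is a simple cycle, and $\mathrm{supp}(D_1)=\mathrm{supp}(D)$.
   Context: For $v\in\mathbb{N}^X$, $|v|=\sum_x v(x)$ and $\|v\|=\max_x v(x)$. A commutative grammar is $G=(\Sigma,S,s_0,\delta)$ with finite alphabet $\Sigma$, finite state set $S$, $s_0\in S$, and a finite set $\delta\subseteq S\times\mathbb{N}^\Sigma\times\mathbb{N}^S$ of transitions $\tau=(s,a,t)$ ($\mathrm{source}(\tau)=s$, $\mathrm{out}(\tau)=a$, $\mathrm{target}(\tau)=t$); every state is the source of some transition, and every transition has $|a|\le1$, $|t|\le2$. It is regular if $|t|\le1$ for all transitions. For $D\in\mathbb{N}^\delta$ let $\mathrm{source}(D)(s)=\sum_{\mathrm{source}(\tau)=s}D(\tau)$, $\mathrm{target}(D)=\sum_\tau D(\tau)\mathrm{target}(\tau)$, $\mathrm{supp}(D)=\{s:\mathrm{source}(D)(s)>0\}$. $D$ is connected from $s$ if every $t\in\mathrm{supp}(D)$ equals $s$ or is reachable by transitions $\tau_1,\ldots,\tau_m$ with $D(\tau_i)>0$, $\mathrm{source}(\tau_1)=s$, $\mathrm{source}(\tau_{i+1})\in\mathrm{target}(\tau_i)$, $t\in\mathrm{target}(\tau_m)$. $D$ is a cycle from $s$ if it is connected from $s$ and $\mathrm{source}(D)=\mathrm{target}(D)$; a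 cycle is a cycle from some state. $D$ is a run if it is connected from $s_0$ and $\mathrm{source}(D)=\mathrm{target}(D)+\{s_0\}$. A simple cycle is a nonzero cycle that cannot be written as a sum of smaller nonzero cycles. *)

theory Defs
  imports Main
begin

(* A vector v in N^X is a function 'x => nat that vanishes outside X. *)
definition vsupp_in :: "('x \<Rightarrow> nat) \<Rightarrow> 'x set \<Rightarrow> bool" where
  "vsupp_in v X \<longleftrightarrow> (\<forall>x. x \<notin> X \<longrightarrow> v x = 0)"

definition vsize :: "'x set \<Rightarrow> ('x \<Rightarrow> nat) \<Rightarrow> nat" where
  "vsize X v = (\<Sum>x\<in>X. v x)"

definition vnorm :: "'x set \<Rightarrow> ('x \<Rightarrow> nat) \<Rightarrow> nat" where
  "vnorm X v = Max (insert 0 (v ` X))"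

type_synonym ('a, 's) trans = "'s \<times> ('a \<Rightarrow> nat) \<times> ('s \<Rightarrow> nat)"

definition tsource :: "('a, 's) trans \<Rightarrow> 's" where "tsource \<tau> = fst \<tau>"
definition tout :: "('a, 's) trans \<Rightarrow> ('a \<Rightarrow> nat)" where "tout \<tau> = fst (snd \<tau>)"
definition ttarget :: "('a, 's) trans \<Rightarrow> ('s \<Rightarrow> nat)" where "ttarget \<tau> = snd (snd \<tau>)"

definition comm_grammar ::
  "'a set \<Rightarrow> 's set \<Rightarrow> 's \<Rightarrow> ('a, 's) trans set \<Rightarrow> bool" where
  "comm_grammar Sig S s0 \<delta> \<longleftrightarrow>
     finite Sig \<and> finite S \<and> s0 \<in> S \<and> finite \<delta> \<and>
     (\<forall>\<tau>\<in>\<delta>. tsource \<tau> \<in> S \<and> vsupp_in (tout \<tau>) Sig \<and> vsupp_in (ttarget \<tau>) S \<and>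
              vsize Sig (tout \<tau>) \<le> 1 \<and> vsize S (ttarget \<tau>) \<le> 2) \<and>
     (\<forall>s\<in>S. \<exists>\<tau>\<in>\<delta>. tsource \<tau> = s)"

definition regular_grammar ::
  "'a set \<Rightarrow> 's set \<Rightarrow> 's \<Rightarrow> ('a, 's) trans set \<Rightarrow> bool" where
  "regular_grammar Sig S s0 \<delta> \<longleftrightarrow>
     comm_grammar Sig S s0 \<delta> \<and> (\<forall>\<tau>\<in>\<delta>. vsize S (ttarget \<tau>) \<le> 1)"

definition src :: "('a, 's) trans set \<Rightarrow> (('a, 's) trans \<Rightarrow> nat) \<Rightarrow> 's \<Rightarrow> nat" where
  "src \<delta> D s = (\<Sum>\<tau>\<in>{\<tau>\<in>\<delta>. tsource \<tau> = s}. D \<tau>)"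

definition tgt :: "('a, 's) trans set \<Rightarrow> (('a, 's) trans \<Rightarrow> nat) \<Rightarrow> 's \<Rightarrow> nat" where
  "tgt \<delta> D s = (\<Sum>\<tau>\<in>\<delta>. D \<tau> * ttarget \<tau> s)"

definition dsupp :: "('a, 's) trans set \<Rightarrow> (('a, 's) trans \<Rightarrow> nat) \<Rightarrow> 's set" where
  "dsupp \<delta> D = {s. src \<delta> D s > 0}"

inductive reach :: "('a, 's) trans set \<Rightarrow> (('a, 's) trans \<Rightarrow> nat) \<Rightarrow> 's \<Rightarrow> 's \<Rightarrow> bool"
  for \<delta> D s where
  base: "\<tau> \<in> \<delta> \<Longrightarrow> D \<tau> > 0 \<Longrightarrow> tsource \<tau> = s \<Longrightarrow> ttarget \<tau> t > 0 \<Longrightarrow> reach \<delta> D s t"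
| step: "reach \<delta> D s u \<Longrightarrow> \<tau> \<in> \<delta> \<Longrightarrow> D \<tau> > 0 \<Longrightarrow> tsource \<tau> = u \<Longrightarrow> ttarget \<tau> t > 0
         \<Longrightarrow> reach \<delta> D s t"

definition connected_from :: "('a, 's) trans set \<Rightarrow> (('a, 's) trans \<Rightarrow> nat) \<Rightarrow> 's \<Rightarrow> bool" where
  "connected_from \<delta> D s \<longleftrightarrow> (\<forall>t\<in>dsupp \<delta> D. t = s \<or> reach \<delta> D s t)"

definition is_vec :: "('a, 's) trans set \<Rightarrow> (('a, 's) trans \<Rightarrow> nat) \<Rightarrow> bool" where
  "is_vec \<delta> D \<longleftrightarrow> vsupp_in D \<delta>"

definition cycle_from :: "('a, 's) trans set \<Rightarrow> (('a, 's) trans \<Rightarrow> nat) \<Rightarrow> 's \<Rightarrow> bool" where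
  "cycle_from \<delta> D s \<longleftrightarrow> is_vec \<delta> D \<and> connected_from \<delta> D s \<and> src \<delta> D = tgt \<delta> D"

definition is_cycle :: "'s set \<Rightarrow> ('a, 's) trans set \<Rightarrow> (('a, 's) trans \<Rightarrow> nat) \<Rightarrow> bool" where
  "is_cycle S \<delta> D \<longleftrightarrow> (\<exists>s\<in>S. cycle_from \<delta> D s)"

definition is_run :: "'s \<Rightarrow> ('a, 's) trans set \<Rightarrow> (('a, 's) trans \<Rightarrow> nat) \<Rightarrow> bool" where
  "is_run s0 \<delta> D \<longleftrightarrow> is_vec \<delta> D \<and> connected_from \<delta> D s0 \<and>
     src \<delta> D = (\<lambda>s. tgt \<delta> D s + (if s = s0 then 1 else 0))"

definition simple_cycle :: "'s set \<Rightarrow> ('a, 's) trans set \<Rightarrow> (('a, 's) trans \<Rightarrow> nat) \<Rightarrow> bool" where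
  "simple_cycle S \<delta> D \<longleftrightarrow> is_cycle S \<delta> D \<and> D \<noteq> (\<lambda>_. 0) \<and>
     \<not> (\<exists>Cs. length Cs \<ge> 2 \<and> (\<forall>C\<in>set Cs. is_cycle S \<delta> C \<and> C \<noteq> (\<lambda>_. 0)) \<and>
            D = (\<lambda>\<tau>. \<Sum>C\<leftarrow>Cs. C \<tau>))"

end

theory Submission
  imports Defs
begin

text \<open>Redirect the final transitions of the regular grammar to \<open>s0\<close>: a run \<open>D\<close> becomes a
  circulation on the transition graph in which the final transitions carry total weight 1.
  Starting from a transition of weight greater than \<open>1 + n |\<delta>|\<close>, peel off simple directed cycles
  avoiding the final transitions: whenever such a cycle has an edge of weight \<open>m \<le> n\<close>, subtracting
  \<open>m\<close> copies of it removes an edge from the support and costs the heavy transition at most \<open>n\<close>.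
  As the support has at most \<open>|\<delta>|\<close> edges, some cycle has weight greater than \<open>n\<close> on all its
  edges. A minimal nonzero balanced vector below it is a simple cycle \<open>C\<close>, and \<open>D - n C\<close> is a
  run with the same support, because no positive entry of \<open>D\<close> drops to zero.\<close>

section \<open>Circulations in finite multigraphs\<close>

definition fiber_sum :: "'e set \<Rightarrow> ('e \<Rightarrow> 'v) \<Rightarrow> ('e \<Rightarrow> nat) \<Rightarrow> 'v \<Rightarrow> nat" where
  "fiber_sum E g X v = (\<Sum>e\<in>{e\<in>E. g e = v}. X e)"

definition circulation :: "'e set \<Rightarrow> ('e \<Rightarrow> 'v) \<Rightarrow> ('e \<Rightarrow> 'v) \<Rightarrow> ('e \<Rightarrow> nat) \<Rightarrow> bool" where
  "circulation E tail head X \<longleftrightarrow> (\<forall>v. fiber_sum E tail X v = fiber_sum E head X v)"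

definition unit_circulation :: "'e set \<Rightarrow> ('e \<Rightarrow> 'v) \<Rightarrow> ('e \<Rightarrow> 'v) \<Rightarrow> ('e \<Rightarrow> nat) \<Rightarrow> bool" where
  "unit_circulation E tail head C \<longleftrightarrow>
     circulation E tail head C \<and> (\<forall>e. C e \<le> 1) \<and> (\<forall>e. 0 < C e \<longrightarrow> e \<in> E) \<and> (\<exists>e. 0 < C e)"

lemma fiber_sum_diff:
  "(\<And>e. G e \<le> X e) \<Longrightarrow> fiber_sum E g (\<lambda>e. X e - G e) v = fiber_sum E g X v - fiber_sum E g G v"
  unfolding fiber_sum_def by (rule sum_subtractf_nat) auto

lemma fiber_sum_scale: "fiber_sum E g (\<lambda>e. k * X e) v = k * fiber_sum E g X v"
  unfolding fiber_sum_def by (simp add: sum_distrib_left)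

lemma sum_fiber_sum:
  "finite E \<Longrightarrow> g ` E \<subseteq> V \<Longrightarrow> finite V \<Longrightarrow> (\<Sum>v\<in>V. fiber_sum E g X v) = sum X E"
  unfolding fiber_sum_def by (rule sum.group)

lemma circulation_diff:
  assumes "circulation E tail head X" "circulation E tail head G" "\<And>e. G e \<le> X e"
  shows "circulation E tail head (\<lambda>e. X e - G e)"
  using assms by (simp add: circulation_def fiber_sum_diff)

lemma circulation_scale:
  "circulation E tail head X \<Longrightarrow> circulation E tail head (\<lambda>e. k * X e)"
  by (simp add: circulation_def fiber_sum_scale)

lemma circulation_successor:
  assumes "finite E" "circulation E tail head X" "e \<in> E" "0 < X e"
  shows "\<exists>e'\<in>E. 0 < X e' \<and> tail e' = head e"
proof -
  have "0 < fiber_sum E head X (head e)"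
    unfolding fiber_sum_def using assms(1,3,4) by (intro sum_pos2[of _ e]) auto
  then have "0 < fiber_sum E tail X (head e)"
    using assms(2) by (simp add: circulation_def)
  then show ?thesis
    unfolding fiber_sum_def by (metis (mono_tags, lifting) mem_Collect_eq not_gr0 sum.neutral)
qed

lemma sum_shift_closed:
  fixes a :: "nat \<Rightarrow> 'a::comm_monoid_add"
  assumes "a i = a j" "i \<le> j"
  shows "(\<Sum>k=i..<j. a (Suc k)) = (\<Sum>k=i..<j. a k)"
proof (cases "i = j")
  case False
  then have "i < j" using assms(2) by simp
  have "(\<Sum>k=i..<j. a (Suc k)) = (\<Sum>k=Suc i..<Suc j. a k)"
    by (rule sum.shift_bounds_Suc_ivl[symmetric])
  also have "\<dots> = (\<Sum>k=Suc i..<j. a k) + a j"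
    using \<open>i < j\<close> by (intro sum.atLeastLessThan_Suc) simp
  also have "\<dots> = (\<Sum>k=i..<j. a k)"
    using \<open>i < j\<close> assms(1) by (simp add: sum.atLeast_Suc_lessThan add.commute)
  finally show ?thesis .
qed simp

lemma closed_walk_circulation:
  fixes w :: "nat \<Rightarrow> 'e"
  assumes fin: "finite E" and walk: "\<And>k. tail (w (Suc k)) = head (w k)"
    and closed: "w i = w j" "i \<le> j" and inj: "inj_on w {i..<j}" and sub: "w ` {i..<j} \<subseteq> E"
  shows "circulation E tail head (\<lambda>e. if e \<in> w ` {i..<j} then 1 else 0)"
proof -
  have count: "fiber_sum E g (\<lambda>e. if e \<in> w ` {i..<j} then 1 else 0) v
      = (\<Sum>k=i..<j. if g (w k) = v then 1 else 0)" for g :: "'e \<Rightarrow> 'v" and v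
  proof -
    have "{e\<in>E. g e = v} \<inter> w ` {i..<j} = w ` {k\<in>{i..<j}. g (w k) = v}"
      using sub by blast
    then have "fiber_sum E g (\<lambda>e. if e \<in> w ` {i..<j} then 1 else 0) v
        = card (w ` {k\<in>{i..<j}. g (w k) = v})"
      unfolding fiber_sum_def using fin by (simp add: sum.If_cases)
    also have "\<dots> = card {k\<in>{i..<j}. g (w k) = v}"
      by (rule card_image) (rule inj_on_subset[OF inj], blast)
    also have "\<dots> = (\<Sum>k=i..<j. if g (w k) = v then 1 else 0)"
      by (simp add: sum.If_cases Int_def)
    finally show ?thesis .
  qed
  have "(\<Sum>k=i..<j. if tail (w (Suc k)) = v then 1 else 0::nat)
      = (\<Sum>k=i..<j. if tail (w k) = v then 1 else 0)" for v
    using closed by (intro sum_shift_closed[where a = "\<lambda>k. if tail (w k) = v then 1 else 0"]) simp_all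
  then show ?thesis
    unfolding circulation_def count by (simp add: walk)
qed

lemma first_repetition:
  fixes w :: "nat \<Rightarrow> 'a"
  assumes "finite (range w)"
  shows "\<exists>i j. i < j \<and> w i = w j \<and> inj_on w {..<j}"
proof -
  have "\<not> inj w"
    using assms finite_imageD by blast
  then obtain a b where "w a = w b" "a \<noteq> b"
    unfolding inj_def by blast
  then have ex: "\<exists>j. \<exists>i<j. w i = w j"
    by (metis linorder_neqE_nat)
  define j where "j = (LEAST j. \<exists>i<j. w i = w j)"
  obtain i where "i < j" "w i = w j"
    using LeastI_ex[OF ex] unfolding j_def by blast
  moreover have "inj_on w {..<j}"
  proof (rule inj_onI)
    fix k l assume "k \<in> {..<j}" "l \<in> {..<j}" "w k = w l"
    then show "k = l"
      using not_less_Least[of k "\<lambda>j. \<exists>i<j. w i = w j"] not_less_Least[of l "\<lambda>j. \<exists>i<j. w i = w j"]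
      unfolding j_def lessThan_iff by (cases k l rule: linorder_cases) auto
  qed
  ultimately show ?thesis by blast
qed

text \<open>Following positive edges from \<open>e0\<close> must eventually repeat an edge; the edges between
  two occurrences form a simple closed walk.\<close>

lemma circulation_contains_unit_circulation:
  assumes fin: "finite E" and circ: "circulation E tail head X" and e0: "e0 \<in> E" "0 < X e0"
  shows "\<exists>C. unit_circulation E tail head C \<and> (\<forall>e. 0 < C e \<longrightarrow> 0 < X e)"
proof -
  define P where "P = {e\<in>E. 0 < X e}"
  define succ where "succ e = (SOME e'. e' \<in> P \<and> tail e' = head e)" for e
  have succ: "succ e \<in> P \<and> tail (succ e) = head e" if "e \<in> P" for e
    unfolding succ_def
    by (rule someI_ex) (use circulation_successor[OF fin circ] that in \<open>auto simp: P_def\<close>)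
  define w where "w k = (succ ^^ k) e0" for k
  have wP: "w k \<in> P" for k
    by (induction k) (use e0 succ in \<open>auto simp: w_def P_def\<close>)
  have walk: "tail (w (Suc k)) = head (w k)" for k
    using succ[OF wP[of k]] by (simp add: w_def)
  have "finite (range w)"
    using wP fin by (metis P_def finite_subset image_subsetI mem_Collect_eq)
  then obtain i j where ij: "i < j" "w i = w j" "inj_on w {..<j}"
    using first_repetition by blast
  define C where "C e = (if e \<in> w ` {i..<j} then 1 else 0::nat)" for e
  have "circulation E tail head C"
    unfolding C_def using fin walk ij wP
    by (intro closed_walk_circulation) (auto simp: P_def intro: inj_on_subset)
  moreover have "0 < C (w i)"
    using ij by (auto simp: C_def intro!: image_eqI[of _ w i])
  moreover have "e \<in> P" if "0 < C e" for e
    using that wP by (auto simp: C_def split: if_splits)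
  moreover have "C e \<le> 1" for e
    by (simp add: C_def)
  ultimately show ?thesis
    unfolding unit_circulation_def P_def by blast
qed

lemma unit_circulation_le:
  assumes "unit_circulation E tail head C" "\<forall>e. 0 < C e \<longrightarrow> 0 < X e"
  shows "C e \<le> X e"
  using assms unfolding unit_circulation_def by (metis le_zero_eq less_one not_le order_trans)

text \<open>If the first cycle passes through \<open>Z\<close>, it uses the one edge of \<open>Z\<close> that carries all
  its weight; removing the cycle empties \<open>Z\<close> and still leaves \<open>e0\<close> positive.\<close>

lemma circulation_contains_unit_circulation_avoiding:
  assumes fin: "finite E" and circ: "circulation E tail head X"
    and Z: "Z \<subseteq> E" "sum X Z \<le> 1" and e0: "e0 \<in> E" "2 \<le> X e0"
  shows "\<exists>C. unit_circulation E tail head C \<and> (\<forall>e. 0 < C e \<longrightarrow> 0 < X e) \<and> (\<forall>z\<in>Z. C z = 0)"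
proof -
  obtain C1 where C1: "unit_circulation E tail head C1" "\<forall>e. 0 < C1 e \<longrightarrow> 0 < X e"
    using circulation_contains_unit_circulation[OF fin circ e0(1)] e0(2) by auto
  show ?thesis
  proof (cases "\<forall>z\<in>Z. C1 z = 0")
    case True
    then show ?thesis using C1 by blast
  next
    case False
    then obtain z1 where z1: "z1 \<in> Z" "0 < C1 z1" by blast
    have le: "C1 e \<le> X e" for e
      using C1 by (rule unit_circulation_le)
    define X' where "X' e = X e - C1 e" for e
    have circ': "circulation E tail head X'"
      unfolding X'_def using circ C1(1) le by (intro circulation_diff) (auto simp: unit_circulation_def)
    have finZ: "finite Z"
      using Z(1) fin by (rule finite_subset)
    have X'Z: "X' z = 0" if "z \<in> Z" for z
    proof (cases "z = z1")
      case True
      have "X z1 \<le> 1"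
        using member_le_sum[of z1 Z X] finZ z1(1) Z(2) by simp
      then show ?thesis using True z1(2) by (simp add: X'_def)
    next
      case False
      have "X z + X z1 \<le> sum X Z"
        using sum_mono2[of Z "{z, z1}" X] finZ that z1(1) False by simp
      moreover have "0 < X z1"
        using C1(2) z1(2) by blast
      ultimately show ?thesis using Z(2) by (simp add: X'_def)
    qed
    have "C1 e0 \<le> 1"
      using C1(1) by (simp add: unit_circulation_def)
    then have "0 < X' e0"
      using e0(2) by (simp add: X'_def)
    then obtain C2 where C2: "unit_circulation E tail head C2" "\<forall>e. 0 < C2 e \<longrightarrow> 0 < X' e"
      using circulation_contains_unit_circulation[OF fin circ' e0(1)] by auto
    have "\<forall>z\<in>Z. C2 z = 0"
      using C2(2) X'Z by (metis less_irrefl neq0_conv)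
    moreover have "\<forall>e. 0 < C2 e \<longrightarrow> 0 < X e"
    proof (intro allI impI)
      fix e assume "0 < C2 e"
      then have "0 < X e - C1 e"
        using C2(2) by (simp add: X'_def)
      then show "0 < X e" by simp
    qed
    ultimately show ?thesis using C2(1) by blast
  qed
qed

text \<open>Induction on the support of \<open>X\<close>: if the lightest edge \<open>m\<close> of the cycle found has
  \<open>X m \<le> n\<close>, subtracting \<open>X m\<close> copies of the cycle removes \<open>m\<close> from the support and lowers
  \<open>X e0\<close> by at most \<open>n\<close>.\<close>

lemma circulation_contains_heavy_unit_circulation:
  assumes fin: "finite E" and circ: "circulation E tail head X"
    and Z: "Z \<subseteq> E" "sum X Z \<le> 1"
    and e0: "e0 \<in> E" "1 + n * card {e\<in>E. 0 < X e} < X e0"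
  shows "\<exists>C. unit_circulation E tail head C \<and> (\<forall>e. 0 < C e \<longrightarrow> n < X e) \<and> (\<forall>z\<in>Z. C z = 0)"
  using circ Z(2) e0(2)
proof (induction "card {e\<in>E. 0 < X e}" arbitrary: X rule: less_induct)
  case (less X)
  obtain C where C: "unit_circulation E tail head C" "\<forall>e. 0 < C e \<longrightarrow> 0 < X e" "\<forall>z\<in>Z. C z = 0"
    using circulation_contains_unit_circulation_avoiding[OF fin less.prems(1) Z(1) less.prems(2) e0(1)]
      less.prems(3) by auto
  obtain m where m: "0 < C m" "\<forall>e. 0 < C e \<longrightarrow> X m \<le> X e"
    using C(1) ex_has_least_nat[of "\<lambda>e. 0 < C e" _ X] unfolding unit_circulation_def by blast
  show ?case
  proof (cases "n < X m")
    case True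
    then show ?thesis using C m by (meson less_le_trans)
  next
    case False
    define X' where "X' e = X e - X m * C e" for e
    have C01: "C e = 0 \<or> C e = 1" for e
      using C(1) unfolding unit_circulation_def by (metis le_SucE le_zero_eq One_nat_def)
    have scaled_le: "X m * C e \<le> X e" for e
      using C01[of e] m(2) by auto
    have circ': "circulation E tail head X'"
      unfolding X'_def using less.prems(1) C(1) scaled_le
      by (intro circulation_diff circulation_scale) (auto simp: unit_circulation_def)
    have le: "X' e \<le> X e" for e
      by (simp add: X'_def)
    have "m \<in> E" "0 < X m" "X' m = 0"
      using C(1,2) m(1) C01[of m] unfolding unit_circulation_def X'_def by auto
    moreover have "{e\<in>E. 0 < X' e} \<subseteq> {e\<in>E. 0 < X e}"
      using le by (auto intro: less_le_trans)
    ultimately have "{e\<in>E. 0 < X' e} \<subset> {e\<in>E. 0 < X e}"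
      by (metis (mono_tags, lifting) less_irrefl mem_Collect_eq psubsetI)
    then have smaller: "card {e\<in>E. 0 < X' e} < card {e\<in>E. 0 < X e}"
      using fin by (intro psubset_card_mono) auto
    have "sum X' Z \<le> 1"
      using sum_mono[of Z X' X] le less.prems(2) by (meson order_trans)
    moreover have "1 + n * card {e\<in>E. 0 < X' e} < X' e0"
    proof -
      have "n * card {e\<in>E. 0 < X' e} + n \<le> n * card {e\<in>E. 0 < X e}"
        using mult_le_mono2[of "Suc (card {e\<in>E. 0 < X' e})" "card {e\<in>E. 0 < X e}" n] smaller
        by simp
      moreover have "X m * C e0 \<le> n"
        using C01[of e0] False by auto
      ultimately show ?thesis
        using less.prems(3) by (simp add: X'_def)
    qed
    ultimately obtain C' where C': "unit_circulation E tail head C'"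
      "\<forall>e. 0 < C' e \<longrightarrow> n < X' e" "\<forall>z\<in>Z. C' z = 0"
      using less.hyps[OF smaller circ'] by blast
    then show ?thesis
      using le by (meson less_le_trans)
  qed
qed


lemma src_eq_fiber_sum: "src \<delta> X = fiber_sum \<delta> tsource X"
  by (simp add: src_def fiber_sum_def fun_eq_iff)

lemma src_pos_iff:
  assumes "finite \<delta>"
  shows "0 < src \<delta> X v \<longleftrightarrow> (\<exists>\<tau>\<in>\<delta>. tsource \<tau> = v \<and> 0 < X \<tau>)"
proof -
  have "src \<delta> X v = 0 \<longleftrightarrow> (\<forall>\<tau>\<in>{\<tau>\<in>\<delta>. tsource \<tau> = v}. X \<tau> = 0)"
    unfolding src_def using assms by (intro sum_eq_0_iff) simp
  then show ?thesis by auto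
qed

lemma tgt_diff:
  assumes "\<And>\<tau>. G \<tau> \<le> X \<tau>"
  shows "tgt \<delta> (\<lambda>\<tau>. X \<tau> - G \<tau>) v = tgt \<delta> X v - tgt \<delta> G v"
  unfolding tgt_def diff_mult_distrib
  by (rule sum_subtractf_nat) (use assms in \<open>simp add: mult_le_mono1\<close>)

lemma tgt_scale: "tgt \<delta> (\<lambda>\<tau>. k * X \<tau>) v = k * tgt \<delta> X v"
  unfolding tgt_def by (simp add: sum_distrib_left mult.assoc)

lemma tgt_mono: "(\<And>\<tau>. G \<tau> \<le> X \<tau>) \<Longrightarrow> tgt \<delta> G v \<le> tgt \<delta> X v"
  unfolding tgt_def by (rule sum_mono) (simp add: mult_le_mono1)

lemma reach_cong_support:
  assumes "reach \<delta> X s t" "\<And>\<tau>. 0 < Y \<tau> \<longleftrightarrow> 0 < X \<tau>"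
  shows "reach \<delta> Y s t"
  using assms(1)
proof induction
  case (base \<tau> t)
  then show ?case using assms(2) by (blast intro: reach.base)
next
  case (step u \<tau> t)
  then show ?case using assms(2) by (blast intro: reach.step)
qed

lemma is_vecD: "is_vec \<delta> X \<Longrightarrow> \<tau> \<notin> \<delta> \<Longrightarrow> X \<tau> = 0"
  unfolding is_vec_def vsupp_in_def by blast

lemma vec_sum_pos:
  assumes "finite \<delta>" "is_vec \<delta> Y" "Y \<noteq> (\<lambda>_. 0)"
  shows "0 < sum Y \<delta>"
proof -
  obtain \<tau> where "0 < Y \<tau>"
    using assms(3) by (metis ext neq0_conv)
  moreover then have "\<tau> \<in> \<delta>"
    using is_vecD[OF assms(2)] by (metis less_irrefl)
  ultimately show ?thesis
    using assms(1) member_le_sum[of \<tau> \<delta> Y] by simp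
qed


section \<open>Regular grammars as transition graphs\<close>

text \<open>Final transitions (those without target) are redirected to \<open>s0\<close>; this closes a run into a
  circulation on the transition graph.\<close>

definition next_state :: "'s \<Rightarrow> ('a, 's) trans \<Rightarrow> 's" where
  "next_state s0 \<tau> = (if ttarget \<tau> = (\<lambda>_. 0) then s0 else (SOME t. 0 < ttarget \<tau> t))"

definition final_trans :: "('a, 's) trans set \<Rightarrow> ('a, 's) trans set" where
  "final_trans \<delta> = {\<tau>\<in>\<delta>. ttarget \<tau> = (\<lambda>_. 0)}"

lemma regular_grammarD:
  assumes "regular_grammar Sig S s0 \<delta>"
  shows "finite S" "finite \<delta>" "s0 \<in> S" "\<And>\<tau>. \<tau> \<in> \<delta> \<Longrightarrow> tsource \<tau> \<in> S"
    "\<And>\<tau> x. \<tau> \<in> \<delta> \<Longrightarrow> x \<notin> S \<Longrightarrow> ttarget \<tau> x = 0"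
    "\<And>\<tau>. \<tau> \<in> \<delta> \<Longrightarrow> (\<Sum>x\<in>S. ttarget \<tau> x) \<le> 1"
  using assms unfolding regular_grammar_def comm_grammar_def vsupp_in_def vsize_def by auto

lemma regular_ttarget:
  assumes reg: "regular_grammar Sig S s0 \<delta>" and \<tau>: "\<tau> \<in> \<delta>" and nonfinal: "ttarget \<tau> \<noteq> (\<lambda>_. 0)"
  shows "ttarget \<tau> = (\<lambda>v. if v = next_state s0 \<tau> then 1 else 0)" and "next_state s0 \<tau> \<in> S"
proof -
  note G = regular_grammarD[OF reg]
  obtain t where t: "0 < ttarget \<tau> t"
    using nonfinal by (metis neq0_conv ext)
  have tS: "t \<in> S"
    using G(5)[OF \<tau>] t by (metis less_irrefl)
  have others: "ttarget \<tau> x = 0" if "x \<noteq> t" for x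
  proof (cases "x \<in> S")
    case True
    then have "ttarget \<tau> t + ttarget \<tau> x \<le> 1"
      using sum_mono2[of S "{t, x}" "ttarget \<tau>"] G(1) G(6)[OF \<tau>] tS that by simp
    then show ?thesis using t by linarith
  qed (use G(5)[OF \<tau>] in simp)
  have "ttarget \<tau> t \<le> 1"
    using member_le_sum[of t S "ttarget \<tau>"] tS G(1) G(6)[OF \<tau>] by simp
  moreover have "next_state s0 \<tau> = t"
  proof -
    have "0 < ttarget \<tau> (SOME t. 0 < ttarget \<tau> t)"
      using t by (rule someI)
    then show ?thesis
      using others nonfinal by (metis less_irrefl next_state_def)
  qed
  ultimately show "ttarget \<tau> = (\<lambda>v. if v = next_state s0 \<tau> then 1 else 0)" and "next_state s0 \<tau> \<in> S"
    using t others tS by auto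
qed

lemma next_state_in_states:
  "regular_grammar Sig S s0 \<delta> \<Longrightarrow> \<tau> \<in> \<delta> \<Longrightarrow> next_state s0 \<tau> \<in> S"
  using regular_ttarget(2) regular_grammarD(3) by (metis next_state_def)

lemma fiber_sum_next_state:
  assumes reg: "regular_grammar Sig S s0 \<delta>"
  shows "fiber_sum \<delta> (next_state s0) X v = tgt \<delta> X v + (if v = s0 then sum X (final_trans \<delta>) else 0)"
proof -
  have fin: "finite \<delta>"
    using regular_grammarD(2)[OF reg] .
  have "fiber_sum \<delta> (next_state s0) X v = (\<Sum>\<tau>\<in>\<delta>. if next_state s0 \<tau> = v then X \<tau> else 0)"
    unfolding fiber_sum_def using fin by (simp add: sum.inter_filter)
  also have "\<dots> = (\<Sum>\<tau>\<in>\<delta>. X \<tau> * ttarget \<tau> v + (if v = s0 \<and> ttarget \<tau> = (\<lambda>_. 0) then X \<tau> else 0))"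
  proof (rule sum.cong)
    fix \<tau> assume \<tau>: "\<tau> \<in> \<delta>"
    show "(if next_state s0 \<tau> = v then X \<tau> else 0)
        = X \<tau> * ttarget \<tau> v + (if v = s0 \<and> ttarget \<tau> = (\<lambda>_. 0) then X \<tau> else 0)"
    proof (cases "ttarget \<tau> = (\<lambda>_. 0)")
      case False
      then show ?thesis
        using regular_ttarget(1)[OF reg \<tau> False] by simp
    qed (auto simp: next_state_def)
  qed simp
  also have "\<dots> = tgt \<delta> X v + (if v = s0 then sum X (final_trans \<delta>) else 0)"
    unfolding tgt_def final_trans_def using fin by (simp add: sum.distrib sum.inter_filter)
  finally show ?thesis .
qed

lemma sum_src_states:
  assumes "regular_grammar Sig S s0 \<delta>"
  shows "(\<Sum>v\<in>S. src \<delta> X v) = sum X \<delta>"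
  unfolding src_eq_fiber_sum using regular_grammarD[OF assms]
  by (intro sum_fiber_sum) auto

lemma sum_tgt_states:
  assumes reg: "regular_grammar Sig S s0 \<delta>"
  shows "(\<Sum>v\<in>S. tgt \<delta> X v) + sum X (final_trans \<delta>) = sum X \<delta>"
proof -
  note G = regular_grammarD[OF reg]
  have "sum X \<delta> = (\<Sum>v\<in>S. fiber_sum \<delta> (next_state s0) X v)"
    using G(1,2) next_state_in_states[OF reg] by (intro sum_fiber_sum[symmetric]) auto
  also have "\<dots> = (\<Sum>v\<in>S. tgt \<delta> X v) + sum X (final_trans \<delta>)"
    using G(1,3) by (simp add: fiber_sum_next_state[OF reg] sum.distrib)
  finally show ?thesis by simp
qed

lemma sum_final_trans:
  assumes reg: "regular_grammar Sig S s0 \<delta>"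
    and balance: "\<And>v. src \<delta> X v = tgt \<delta> X v + (if v = s0 then c else 0)"
  shows "sum X (final_trans \<delta>) = c"
proof -
  have "(\<Sum>v\<in>S. src \<delta> X v) = (\<Sum>v\<in>S. tgt \<delta> X v) + c"
    using balance regular_grammarD(1,3)[OF reg] by (simp add: sum.distrib)
  then show ?thesis
    using sum_tgt_states[OF reg, of X] sum_src_states[OF reg, of X] by simp
qed

lemma circulation_of_balance:
  assumes reg: "regular_grammar Sig S s0 \<delta>"
    and balance: "\<And>v. src \<delta> X v = tgt \<delta> X v + (if v = s0 then c else 0)"
  shows "circulation \<delta> tsource (next_state s0) X"
  unfolding circulation_def
  using balance sum_final_trans[OF reg balance] fiber_sum_next_state[OF reg]
  by (simp add: src_eq_fiber_sum[symmetric])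

lemma balanced_of_circulation:
  assumes reg: "regular_grammar Sig S s0 \<delta>"
    and "circulation \<delta> tsource (next_state s0) X" "\<forall>\<tau>\<in>final_trans \<delta>. X \<tau> = 0"
  shows "src \<delta> X = tgt \<delta> X"
  using assms(2,3) fiber_sum_next_state[OF reg]
  by (simp add: circulation_def src_eq_fiber_sum fun_eq_iff)


section \<open>Simple cycles\<close>

definition reach_part :: "('a, 's) trans set \<Rightarrow> (('a, 's) trans \<Rightarrow> nat) \<Rightarrow> 's \<Rightarrow> ('a, 's) trans \<Rightarrow> nat"
  where "reach_part \<delta> X s \<tau> = (if tsource \<tau> = s \<or> reach \<delta> X s (tsource \<tau>) then X \<tau> else 0)"

lemma reach_part_le: "reach_part \<delta> X s \<tau> \<le> X \<tau>"
  by (simp add: reach_part_def)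

lemma tgt_reach_part_le_src:
  assumes "src \<delta> X = tgt \<delta> X"
  shows "tgt \<delta> (reach_part \<delta> X s) v \<le> src \<delta> (reach_part \<delta> X s) v"
proof (cases "v = s \<or> reach \<delta> X s v")
  case True
  have "src \<delta> (reach_part \<delta> X s) v = src \<delta> X v"
    unfolding src_def reach_part_def using True by (intro sum.cong) auto
  moreover have "tgt \<delta> (reach_part \<delta> X s) v \<le> tgt \<delta> X v"
    by (rule tgt_mono) (rule reach_part_le)
  ultimately show ?thesis
    using assms by simp
next
  case False
  have "reach_part \<delta> X s \<tau> * ttarget \<tau> v = 0" if "\<tau> \<in> \<delta>" for \<tau>
  proof (rule ccontr)
    assume "reach_part \<delta> X s \<tau> * ttarget \<tau> v \<noteq> 0"
    then have "tsource \<tau> = s \<or> reach \<delta> X s (tsource \<tau>)" "0 < X \<tau>" "0 < ttarget \<tau> v"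
      by (auto simp: reach_part_def split: if_splits)
    then have "reach \<delta> X s v"
      using that reach.base[of \<tau> \<delta> X s v] reach.step[of \<delta> X s "tsource \<tau>" \<tau> v] by blast
    then show False
      using False by blast
  qed
  then have "tgt \<delta> (reach_part \<delta> X s) v = 0"
    unfolding tgt_def by (rule sum.neutral[OF ballI])
  then show ?thesis by simp
qed

text \<open>In a regular grammar a balanced vector puts no weight on final transitions, so the total
  in-weight of the states equals their total out-weight and the inequality above is an equality.\<close>

lemma reach_part_balanced:
  assumes reg: "regular_grammar Sig S s0 \<delta>" and balanced: "src \<delta> X = tgt \<delta> X"
  shows "src \<delta> (reach_part \<delta> X s) = tgt \<delta> (reach_part \<delta> X s)"
proof
  fix v
  note G = regular_grammarD[OF reg]
  let ?Y = "reach_part \<delta> X s"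
  have "finite (final_trans \<delta>)"
    using G(2) by (simp add: final_trans_def)
  moreover have "sum X (final_trans \<delta>) = 0"
    using sum_final_trans[OF reg, of X 0] balanced by simp
  ultimately have "X \<tau> = 0" if "\<tau> \<in> final_trans \<delta>" for \<tau>
    using that sum_eq_0_iff by blast
  then have "sum ?Y (final_trans \<delta>) = 0"
    using reach_part_le[of \<delta> X s] by (intro sum.neutral) (metis le_zero_eq)
  then have "(\<Sum>v\<in>S. tgt \<delta> ?Y v) = (\<Sum>v\<in>S. src \<delta> ?Y v)"
    using sum_tgt_states[OF reg, of ?Y] sum_src_states[OF reg, of ?Y] by simp
  then have onS: "tgt \<delta> ?Y v = src \<delta> ?Y v" if "v \<in> S"
    using sum_mono_inv[of "tgt \<delta> ?Y" S "src \<delta> ?Y" v] tgt_reach_part_le_src[OF balanced] that G(1)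
    by blast
  have "src \<delta> ?Y v = 0" if "v \<notin> S"
    unfolding src_def using G(4) that by (intro sum.neutral) auto
  then show "src \<delta> ?Y v = tgt \<delta> ?Y v"
    using onS tgt_reach_part_le_src[OF balanced, of s v] by (cases "v \<in> S") auto
qed

text \<open>Minimality forces the reachable part to be everything.\<close>

lemma minimal_balanced_connected:
  assumes reg: "regular_grammar Sig S s0 \<delta>" and balanced: "src \<delta> X = tgt \<delta> X"
    and \<tau>1: "\<tau>1 \<in> \<delta>" "0 < X \<tau>1"
    and minimal: "\<And>Y. (\<forall>\<tau>. Y \<tau> \<le> X \<tau>) \<Longrightarrow> Y \<noteq> (\<lambda>_. 0) \<Longrightarrow> src \<delta> Y = tgt \<delta> Y \<Longrightarrow> sum X \<delta> \<le> sum Y \<delta>"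
  shows "connected_from \<delta> X (tsource \<tau>1)"
  unfolding connected_from_def
proof
  let ?Y = "reach_part \<delta> X (tsource \<tau>1)"
  have "?Y \<tau>1 = X \<tau>1"
    by (simp add: reach_part_def)
  then have "?Y \<noteq> (\<lambda>_. 0)"
    using \<tau>1(2) by (auto dest: fun_cong[of _ _ \<tau>1])
  then have "sum X \<delta> \<le> sum ?Y \<delta>"
    by (intro minimal allI reach_part_le reach_part_balanced[OF reg balanced])
  moreover have "sum ?Y \<delta> \<le> sum X \<delta>"
    by (intro sum_mono reach_part_le)
  ultimately have same: "?Y \<tau> = X \<tau>" if "\<tau> \<in> \<delta>" for \<tau>
    using sum_mono_inv[of ?Y \<delta> X \<tau>] regular_grammarD(2)[OF reg] reach_part_le that by force
  fix t assume "t \<in> dsupp \<delta> X"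
  then obtain \<tau> where "\<tau> \<in> \<delta>" "tsource \<tau> = t" "0 < X \<tau>"
    using src_pos_iff[OF regular_grammarD(2)[OF reg]] by (auto simp: dsupp_def)
  then have "0 < ?Y \<tau>"
    using same by simp
  then show "t = tsource \<tau>1 \<or> reach \<delta> X (tsource \<tau>1) t"
    using \<open>tsource \<tau> = t\<close> by (simp add: reach_part_def split: if_splits)
qed

lemma minimal_cycle_simple:
  assumes fin: "finite \<delta>" and cycle: "is_cycle S \<delta> X" "X \<noteq> (\<lambda>_. 0)"
    and minimal: "\<And>Y. is_cycle S \<delta> Y \<Longrightarrow> Y \<noteq> (\<lambda>_. 0) \<Longrightarrow> (\<forall>\<tau>. Y \<tau> \<le> X \<tau>) \<Longrightarrow> sum X \<delta> \<le> sum Y \<delta>"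
  shows "simple_cycle S \<delta> X"
  unfolding simple_cycle_def
proof (intro conjI cycle notI)
  assume "\<exists>Cs. 2 \<le> length Cs \<and> (\<forall>C\<in>set Cs. is_cycle S \<delta> C \<and> C \<noteq> (\<lambda>_. 0)) \<and> X = (\<lambda>\<tau>. \<Sum>C\<leftarrow>Cs. C \<tau>)"
  then obtain Cs where Cs: "2 \<le> length Cs" "\<forall>C\<in>set Cs. is_cycle S \<delta> C \<and> C \<noteq> (\<lambda>_. 0)"
    "X = (\<lambda>\<tau>. \<Sum>C\<leftarrow>Cs. C \<tau>)"
    by blast
  then obtain A B Cs' where Cs_eq: "Cs = A # B # Cs'"
    by (cases Cs rule: remdups_adj.cases) auto
  have X_ge: "A \<tau> + B \<tau> \<le> X \<tau>" for \<tau>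
    using Cs(3) Cs_eq by simp
  have bound: "sum X \<delta> \<le> sum C \<delta> \<and> 0 < sum C \<delta>" if "C \<in> {A, B}" for C
  proof -
    have "is_cycle S \<delta> C" "C \<noteq> (\<lambda>_. 0)"
      using Cs(2) Cs_eq that by auto
    moreover have "\<forall>\<tau>. C \<tau> \<le> X \<tau>"
      using X_ge that by (metis add_leD1 add_leD2 insert_iff singletonD)
    ultimately show ?thesis
      using minimal vec_sum_pos[OF fin] by (auto simp: is_cycle_def cycle_from_def)
  qed
  have "sum A \<delta> + sum B \<delta> \<le> sum X \<delta>"
    unfolding sum.distrib[symmetric] by (rule sum_mono) (rule X_ge)
  then show False
    using bound[of A] bound[of B] by simp
qed

lemma balanced_contains_simple_cycle:
  assumes reg: "regular_grammar Sig S s0 \<delta>"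
    and C: "is_vec \<delta> C" "C \<noteq> (\<lambda>_. 0)" "src \<delta> C = tgt \<delta> C"
  shows "\<exists>X. simple_cycle S \<delta> X \<and> (\<forall>\<tau>. X \<tau> \<le> C \<tau>)"
proof -
  note G = regular_grammarD[OF reg]
  define K where "K = {Y. (\<forall>\<tau>. Y \<tau> \<le> C \<tau>) \<and> Y \<noteq> (\<lambda>_. 0) \<and> src \<delta> Y = tgt \<delta> Y}"
  have "C \<in> K"
    using C by (simp add: K_def)
  then obtain X where "X \<in> K" and least: "\<And>Y. Y \<in> K \<Longrightarrow> sum X \<delta> \<le> sum Y \<delta>"
    using ex_has_least_nat[of "\<lambda>Y. Y \<in> K" C "\<lambda>Y. sum Y \<delta>"] by blast
  then have X_le: "\<And>\<tau>. X \<tau> \<le> C \<tau>" and X_nz: "X \<noteq> (\<lambda>_. 0)" and balanced: "src \<delta> X = tgt \<delta> X"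
    unfolding K_def by blast+
  have minimal: "sum X \<delta> \<le> sum Y \<delta>"
    if "\<forall>\<tau>. Y \<tau> \<le> X \<tau>" "Y \<noteq> (\<lambda>_. 0)" "src \<delta> Y = tgt \<delta> Y" for Y
  proof (rule least)
    show "Y \<in> K"
      using that X_le unfolding K_def by (blast intro: order_trans)
  qed
  have vec: "is_vec \<delta> X"
    unfolding is_vec_def vsupp_in_def using is_vecD[OF C(1)] X_le by (metis le_zero_eq)
  obtain \<tau>1 where \<tau>1: "0 < X \<tau>1"
    using X_nz by (metis ext neq0_conv)
  then have "\<tau>1 \<in> \<delta>"
    using is_vecD[OF vec] by (metis less_irrefl)
  then have "is_cycle S \<delta> X"
    unfolding is_cycle_def cycle_from_def
    using G(4) vec balanced minimal_balanced_connected[OF reg balanced _ \<tau>1 minimal] by blast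
  moreover have "simple_cycle S \<delta> X"
  proof (rule minimal_cycle_simple[OF G(2) calculation X_nz])
    show "sum X \<delta> \<le> sum Y \<delta>" if "is_cycle S \<delta> Y" "Y \<noteq> (\<lambda>_. 0)" "\<forall>\<tau>. Y \<tau> \<le> X \<tau>" for Y
      using that minimal unfolding is_cycle_def cycle_from_def by blast
  qed
  ultimately show ?thesis
    using X_le by blast
qed


lemma run_contains_heavy_cycle:
  assumes reg: "regular_grammar Sig S s0 \<delta>" and run: "is_run s0 \<delta> D"
    and heavy: "1 + n * card \<delta> < vnorm \<delta> D"
  shows "\<exists>C. is_vec \<delta> C \<and> C \<noteq> (\<lambda>_. 0) \<and> src \<delta> C = tgt \<delta> C \<and> (\<forall>\<tau>. C \<tau> \<le> 1)
           \<and> (\<forall>\<tau>. 0 < C \<tau> \<longrightarrow> n < D \<tau>)"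
proof -
  note G = regular_grammarD[OF reg]
  have balance: "src \<delta> D v = tgt \<delta> D v + (if v = s0 then 1 else 0)" for v
    using run by (simp add: is_run_def)
  have "vnorm \<delta> D \<in> insert 0 (D ` \<delta>)"
    unfolding vnorm_def using G(2) by (intro Max_in) auto
  then obtain e0 where e0: "e0 \<in> \<delta>" "vnorm \<delta> D = D e0"
    using heavy by auto
  have "n * card {e\<in>\<delta>. 0 < D e} \<le> n * card \<delta>"
    using G(2) by (intro mult_le_mono2 card_mono) auto
  then have bound: "1 + n * card {e\<in>\<delta>. 0 < D e} < D e0"
    using heavy e0(2) by linarith
  have final: "final_trans \<delta> \<subseteq> \<delta>" "sum D (final_trans \<delta>) \<le> 1"
    using sum_final_trans[OF reg balance] by (auto simp: final_trans_def)
  obtain C where C: "unit_circulation \<delta> tsource (next_state s0) C"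
    "\<forall>\<tau>. 0 < C \<tau> \<longrightarrow> n < D \<tau>" "\<forall>\<tau>\<in>final_trans \<delta>. C \<tau> = 0"
    using circulation_contains_heavy_unit_circulation[OF G(2) circulation_of_balance[OF reg balance]
        final e0(1) bound] by blast
  then have "src \<delta> C = tgt \<delta> C"
    using balanced_of_circulation[OF reg] by (simp add: unit_circulation_def)
  moreover obtain \<tau> where "0 < C \<tau>"
    using C(1) by (auto simp: unit_circulation_def)
  then have "C \<noteq> (\<lambda>_. 0)"
    by auto
  moreover have "is_vec \<delta> C" "\<forall>\<tau>. C \<tau> \<le> 1"
    using C(1) unfolding unit_circulation_def is_vec_def vsupp_in_def by (blast intro: gr0I)+
  ultimately show ?thesis
    using C(2) by blast
qed

lemma run_minus_cycle:
  assumes fin: "finite \<delta>" and run: "is_run s0 \<delta> D" and balanced: "src \<delta> C = tgt \<delta> C"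
    and below: "\<And>\<tau>. 0 < C \<tau> \<Longrightarrow> n * C \<tau> < D \<tau>"
  shows "is_run s0 \<delta> (\<lambda>\<tau>. D \<tau> - n * C \<tau>)" and "dsupp \<delta> (\<lambda>\<tau>. D \<tau> - n * C \<tau>) = dsupp \<delta> D"
proof -
  let ?D1 = "\<lambda>\<tau>. D \<tau> - n * C \<tau>"
  have le: "n * C \<tau> \<le> D \<tau>" for \<tau>
    using below[of \<tau>] by (cases "C \<tau> = 0") auto
  have pos: "0 < ?D1 \<tau> \<longleftrightarrow> 0 < D \<tau>" for \<tau>
    using below[of \<tau>] by (cases "C \<tau> = 0") auto
  show dsupp: "dsupp \<delta> ?D1 = dsupp \<delta> D"
    unfolding dsupp_def using src_pos_iff[OF fin] pos by simp
  have "is_vec \<delta> ?D1"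
    using run by (simp add: is_run_def is_vec_def vsupp_in_def)
  moreover have "connected_from \<delta> ?D1 s0"
    using run reach_cong_support[of \<delta> D s0 _ ?D1] pos dsupp
    unfolding is_run_def connected_from_def by blast
  moreover have "src \<delta> ?D1 v = tgt \<delta> ?D1 v + (if v = s0 then 1 else 0)" for v
  proof -
    have "src \<delta> ?D1 v = src \<delta> D v - n * src \<delta> C v"
      using le by (simp add: src_eq_fiber_sum fiber_sum_diff fiber_sum_scale)
    moreover have "tgt \<delta> ?D1 v = tgt \<delta> D v - n * tgt \<delta> C v"
      using le by (simp add: tgt_diff tgt_scale)
    moreover have "n * tgt \<delta> C v \<le> tgt \<delta> D v"
      using tgt_mono[of "\<lambda>\<tau>. n * C \<tau>" D, OF le] by (simp add: tgt_scale)
    ultimately show ?thesis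
      using run balanced by (simp add: is_run_def)
  qed
  ultimately show "is_run s0 \<delta> ?D1"
    by (simp add: is_run_def fun_eq_iff)
qed

theorem lemma5:
  fixes Sig :: "'a set" and S :: "'s set" and s0 :: 's and \<delta> :: "('a, 's) trans set"
    and n :: nat and D :: "('a, 's) trans \<Rightarrow> nat"
  assumes "regular_grammar Sig S s0 \<delta>"
    and "is_run s0 \<delta> D"
    and "vnorm \<delta> D > 1 + n * card \<delta>"
  shows "\<exists>D1 C. D = (\<lambda>\<tau>. D1 \<tau> + n * C \<tau>) \<and> is_run s0 \<delta> D1 \<and> simple_cycle S \<delta> C
           \<and> dsupp \<delta> D1 = dsupp \<delta> D"
proof -
  obtain C where C: "is_vec \<delta> C" "C \<noteq> (\<lambda>_. 0)" "src \<delta> C = tgt \<delta> C" "\<forall>\<tau>. C \<tau> \<le> 1"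
    "\<forall>\<tau>. 0 < C \<tau> \<longrightarrow> n < D \<tau>"
    using run_contains_heavy_cycle[OF assms] by blast
  obtain X where X: "simple_cycle S \<delta> X" "\<forall>\<tau>. X \<tau> \<le> C \<tau>"
    using balanced_contains_simple_cycle[OF assms(1) C(1-3)] by blast
  have balanced: "src \<delta> X = tgt \<delta> X"
    using X(1) by (auto simp: simple_cycle_def is_cycle_def cycle_from_def)
  have below: "n * X \<tau> < D \<tau>" if "0 < X \<tau>" for \<tau>
  proof -
    have "X \<tau> = 1" "0 < C \<tau>"
      using that X(2)[rule_format, of \<tau>] C(4)[rule_format, of \<tau>] by linarith+
    then show ?thesis
      using C(5)[rule_format, of \<tau>] by simp
  qed
  have "D = (\<lambda>\<tau>. (D \<tau> - n * X \<tau>) + n * X \<tau>)"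
  proof
    show "D \<tau> = D \<tau> - n * X \<tau> + n * X \<tau>" for \<tau>
      using below[of \<tau>] by (cases "X \<tau> = 0") auto
  qed
  moreover have "is_run s0 \<delta> (\<lambda>\<tau>. D \<tau> - n * X \<tau>)" "dsupp \<delta> (\<lambda>\<tau>. D \<tau> - n * X \<tau>) = dsupp \<delta> D"
    by (rule run_minus_cycle[OF regular_grammarD(2)[OF assms(1)] assms(2) balanced], erule below)+
  ultimately show ?thesis
    using X(1) by (intro exI[of _ "\<lambda>\<tau>. D \<tau> - n * X \<tau>"] exI[of _ X]) simp
qed

end
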